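(* Let $K=[s,t]$ with $0<s<t<\xi$. There are constants $C=C(K)>0$ and $D\ge0$ such that for every $\sigma\in\mathcal A^*$ with $\pi(\sigma)\in K$, $$\|M(\sigma)\|_1\le C|\sigma|^D\eta(\sigma),$$ where $\|\cdot\|_1$ is the operator norm induced by the $\ell^1$ norm.
   Context: Fix integers $d\ge 3$ and $m\ge d$ and a probability vector $\mathbf p=(p_0,\dots,p_m)$ with all $p_i>0$ which is regular, normalized so that $p_0\le p_m\le p_i$ for all $1\le i\le m-1$. Let $\mathcal A=\{0,\dots,m\}$, $\mathcal A^k$ the set of words of length $k$, $\mathcal A^*=\bigcup_{k\ge0}\mathcal A^k$, $|\sigma|$ the length of $\sigma$. Put $\xi=m/(d-1)$. Define $\pi(\sigma)=\sum_{i=1}^{|\sigma|}\sigma_i d^{-i}$. For $\sigma\in\mathcal A^k$ let $\mathbf p(\sigma)=\prod_{j=1}^k p_{\sigma_j}$ and $\eta(\sigma)=\sum\{\mathbf p(\sigma'):\sigma'\in\mathcal A^k,\ \pi(\sigma')=\pi(\sigma)\}$. Let $a=1+\lfloor (m-d)/(d-1)\rfloor$, set $p_j=0$ for $j\notin\mathcal A$, and let $M_i$ ($i\in\mathcal A$) be the $(2a+1)\times(2a+1)$ matrix indexed by $\{-a,\dots,a\}^2$ with $M_i(k,l)=p_{k+i-ld}$; $M(\sigma)=M_{\sigma_k}\cdots M_{\sigma_1}$ for $\sigma\in\mathcal A^k$. *)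

theory Defs
  imports Complex_Main
begin

text \<open>Words over the alphabet {0..m} are lists of naturals; the i-th letter
  sigma_i (1-based) is the list element at position i-1.\<close>

definition words :: "nat \<Rightarrow> nat \<Rightarrow> nat list set" where
  "words m k = {\<sigma>. length \<sigma> = k \<and> set \<sigma> \<subseteq> {0..m}}"

definition proj :: "nat \<Rightarrow> nat list \<Rightarrow> real" where
  "proj d \<sigma> = (\<Sum>i<length \<sigma>. real (\<sigma> ! i) / real d ^ (i + 1))"

definition wprob :: "(nat \<Rightarrow> real) \<Rightarrow> nat list \<Rightarrow> real" where
  "wprob p \<sigma> = (\<Prod>j<length \<sigma>. p (\<sigma> ! j))"

definition eta :: "nat \<Rightarrow> nat \<Rightarrow> (nat \<Rightarrow> real) \<Rightarrow> nat list \<Rightarrow> real" where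
  "eta d m p \<sigma> =
     (\<Sum>\<sigma>' \<in> {\<sigma>' \<in> words m (length \<sigma>). proj d \<sigma>' = proj d \<sigma>}. wprob p \<sigma>')"

definition apar :: "nat \<Rightarrow> nat \<Rightarrow> int" where
  "apar d m = 1 + \<lfloor>(real m - real d) / (real d - 1)\<rfloor>"

definition idx :: "nat \<Rightarrow> nat \<Rightarrow> int set" where
  "idx d m = {- apar d m .. apar d m}"

definition pext :: "nat \<Rightarrow> (nat \<Rightarrow> real) \<Rightarrow> int \<Rightarrow> real" where
  "pext m p j = (if 0 \<le> j \<and> j \<le> int m then p (nat j) else 0)"

definition mat_mult :: "int set \<Rightarrow> (int \<Rightarrow> int \<Rightarrow> real) \<Rightarrow> (int \<Rightarrow> int \<Rightarrow> real) \<Rightarrow> int \<Rightarrow> int \<Rightarrow> real" where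
  "mat_mult I A B = (\<lambda>k l. \<Sum>j\<in>I. A k j * B j l)"

definition mat_id :: "int \<Rightarrow> int \<Rightarrow> real" where
  "mat_id = (\<lambda>k l. if k = l then 1 else 0)"

definition mat_vec :: "int set \<Rightarrow> (int \<Rightarrow> int \<Rightarrow> real) \<Rightarrow> (int \<Rightarrow> real) \<Rightarrow> int \<Rightarrow> real" where
  "mat_vec I A x = (\<lambda>k. \<Sum>l\<in>I. A k l * x l)"

definition l1norm :: "int set \<Rightarrow> (int \<Rightarrow> real) \<Rightarrow> real" where
  "l1norm I x = (\<Sum>k\<in>I. \<bar>x k\<bar>)"

definition opnorm1 :: "int set \<Rightarrow> (int \<Rightarrow> int \<Rightarrow> real) \<Rightarrow> real" where
  "opnorm1 I A = Sup {l1norm I (mat_vec I A x) | x. l1norm I x \<le> 1}"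

definition Mi :: "nat \<Rightarrow> nat \<Rightarrow> (nat \<Rightarrow> real) \<Rightarrow> nat \<Rightarrow> int \<Rightarrow> int \<Rightarrow> real" where
  "Mi d m p i = (\<lambda>k l. pext m p (k + int i - l * int d))"

text \<open>M(sigma) = M_{sigma_k} ... M_{sigma_1}.\<close>

fun Mw :: "nat \<Rightarrow> nat \<Rightarrow> (nat \<Rightarrow> real) \<Rightarrow> nat list \<Rightarrow> int \<Rightarrow> int \<Rightarrow> real" where
  "Mw d m p [] = mat_id"
| "Mw d m p (i # \<sigma>) = mat_mult (idx d m) (Mw d m p \<sigma>) (Mi d m p i)"

end

theory Submission
  imports Defs
begin

(* Let N be the base-d value of sigma and F_n(X) the total p-weight of the words of length n
   with base-d value X, so that eta(sigma) = F_n(N).  Every entry M(sigma)(k,l) is at most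
   F_n(N + k - l d^n).  As consecutive p_i have bounded ratios, F_n(X + 1) and F_n(X - 1) are at
   most K(n+1) F_n(X) for 0 <= X <= m(d^n - 1)/(d - 1); the normalisation p_0 <= p_(d-1) and
   p_m <= p_(m+1-d) pays for the carries.  So the shift by k costs a polynomial factor.  The shift
   by l d^n is removed by peeling off last digits: as long as X/d^n stays in a compact subinterval
   of (0, xi), it stays there after removing a digit, so its cost is that of a shift at a fixed
   level R, a constant.  Words shorter than R are handled by eta(sigma) >= p(sigma) >= (min p)^R. *)

lemma opnorm1_le_card_mult:
  assumes "finite I" and entry: "\<And>k l. k \<in> I \<Longrightarrow> l \<in> I \<Longrightarrow> \<bar>A k l\<bar> \<le> E"
  shows "opnorm1 I A \<le> real (card I) * E"
  unfolding opnorm1_def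
proof (rule cSup_least)
  have "l1norm I (\<lambda>_. 0) \<le> 1"
    by (simp add: l1norm_def)
  then show "{l1norm I (mat_vec I A x) |x. l1norm I x \<le> 1} \<noteq> {}"
    by blast
  fix y assume "y \<in> {l1norm I (mat_vec I A x) |x. l1norm I x \<le> 1}"
  then obtain x where y: "y = l1norm I (mat_vec I A x)" and x: "l1norm I x \<le> 1" by blast
  have "y \<le> (\<Sum>k\<in>I. \<Sum>l\<in>I. E * \<bar>x l\<bar>)"
    unfolding y l1norm_def mat_vec_def
  proof (rule sum_mono)
    fix k assume "k \<in> I"
    have "\<bar>\<Sum>l\<in>I. A k l * x l\<bar> \<le> (\<Sum>l\<in>I. \<bar>A k l\<bar> * \<bar>x l\<bar>)"
      unfolding abs_mult[symmetric] by (rule sum_abs)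
    also have "\<dots> \<le> (\<Sum>l\<in>I. E * \<bar>x l\<bar>)"
      by (intro sum_mono mult_right_mono entry \<open>k \<in> I\<close>) auto
    finally show "\<bar>\<Sum>l\<in>I. A k l * x l\<bar> \<le> (\<Sum>l\<in>I. E * \<bar>x l\<bar>)" .
  qed
  also have "\<dots> = real (card I) * (E * l1norm I x)"
    by (simp add: l1norm_def sum_distrib_left)
  also have "\<dots> \<le> real (card I) * E"
  proof (cases "I = {}")
    case False
    then obtain k where "k \<in> I"
      by blast
    then have "0 \<le> E"
      using entry[of k k] by linarith
    with x show ?thesis
      by (intro mult_left_mono mult_left_le) auto
  qed simp
  finally show "y \<le> real (card I) * E" .
qed

lemma sum_le_sum_vanishing_outside:
  fixes f :: "'a \<Rightarrow> 'b::ordered_comm_monoid_add"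
  assumes "finite A" "finite T" "\<And>x. x \<in> A - T \<Longrightarrow> f x = 0" "\<And>x. x \<in> T \<Longrightarrow> 0 \<le> f x"
  shows "sum f A \<le> sum f T"
proof -
  have "sum f A = sum f (A \<inter> T)"
    using assms(1,3) by (intro sum.mono_neutral_right) auto
  also have "\<dots> \<le> sum f T"
    using assms(2,4) by (intro sum_mono2) auto
  finally show ?thesis .
qed

fun digit_val :: "nat \<Rightarrow> nat list \<Rightarrow> int" where
  "digit_val d [] = 0"
| "digit_val d (c # \<tau>) = int c * int d ^ length \<tau> + digit_val d \<tau>"

fun max_digit_val :: "nat \<Rightarrow> nat \<Rightarrow> nat \<Rightarrow> int" where
  "max_digit_val d m 0 = 0"
| "max_digit_val d m (Suc n) = int m * int d ^ n + max_digit_val d m n"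

lemma digit_val_nonneg: "0 \<le> digit_val d \<tau>"
  by (induction \<tau>) auto

lemma digit_val_le_max: "set \<tau> \<subseteq> {0..m} \<Longrightarrow> digit_val d \<tau> \<le> max_digit_val d m (length \<tau>)"
  by (induction \<tau>) (auto intro!: add_mono mult_right_mono)

lemma max_digit_val_eq:
  assumes "1 < d"
  shows "max_digit_val d m n = real m / (real d - 1) * (real d ^ n - 1)"
proof -
  have "(real d - 1) * max_digit_val d m n = real m * (real d ^ n - 1)"
    by (induction n) (auto simp: algebra_simps)
  then show ?thesis
    using assms by (simp add: field_simps)
qed

lemma proj_mult_power_eq_digit_val:
  assumes "0 < d"
  shows "proj d \<tau> * real d ^ length \<tau> = digit_val d \<tau>"
proof (induction \<tau>)
  case Nil
  then show ?case by (simp add: proj_def)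
next
  case (Cons c \<tau>)
  have "proj d (c # \<tau>) = real c / real d + (\<Sum>i<length \<tau>. real (\<tau> ! i) / real d ^ (i + 2))"
    unfolding proj_def by (simp only: length_Cons sum.lessThan_Suc_shift) simp
  also have "(\<Sum>i<length \<tau>. real (\<tau> ! i) / real d ^ (i + 2)) = proj d \<tau> / real d"
    unfolding proj_def sum_divide_distrib by (rule sum.cong) (auto simp: field_simps)
  finally have "real d * proj d (c # \<tau>) = real c + proj d \<tau>"
    using assms by (simp add: field_simps)
  then have "proj d (c # \<tau>) * real d ^ length (c # \<tau>) = (real c + proj d \<tau>) * real d ^ length \<tau>"
    by (simp add: mult_ac)
  also have "\<dots> = real c * real d ^ length \<tau> + digit_val d \<tau>"
    using Cons by (simp add: distrib_right)
  finally show ?case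
    by simp
qed

fun digit_mass :: "nat \<Rightarrow> nat \<Rightarrow> (nat \<Rightarrow> real) \<Rightarrow> nat \<Rightarrow> int \<Rightarrow> real" where
  "digit_mass d m p 0 X = (if X = 0 then 1 else 0)"
| "digit_mass d m p (Suc n) X = (\<Sum>c\<le>m. p c * digit_mass d m p n (X - int c * int d ^ n))"

lemma digit_mass_nonneg: "(\<And>i. i \<le> m \<Longrightarrow> 0 \<le> p i) \<Longrightarrow> 0 \<le> digit_mass d m p n X"
  by (induction n arbitrary: X) (auto intro!: sum_nonneg)

lemma digit_mass_le_1:
  assumes "\<And>i. i \<le> m \<Longrightarrow> 0 \<le> p i" "(\<Sum>i\<le>m. p i) = 1"
  shows "digit_mass d m p n X \<le> 1"
proof (induction n arbitrary: X)
  case 0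
  then show ?case by simp
next
  case (Suc n)
  have "digit_mass d m p (Suc n) X \<le> (\<Sum>c\<le>m. p c * 1)"
    unfolding digit_mass.simps using Suc assms(1) by (intro sum_mono mult_left_mono) auto
  then show ?case
    using assms(2) by simp
qed

lemma finite_words: "finite (words m n)"
proof -
  have "words m n = {\<tau>. set \<tau> \<subseteq> {0..m} \<and> length \<tau> = n}"
    unfolding words_def by auto
  then show ?thesis
    using finite_lists_length_eq[of "{0..m}" n] by simp
qed

lemma sum_words_Suc:
  "(\<Sum>\<tau>\<in>words m (Suc n). f \<tau>) = (\<Sum>c\<le>m. \<Sum>\<tau>\<in>words m n. f (c # \<tau>))"
proof -
  have "words m (Suc n) = (\<lambda>(c, \<tau>). c # \<tau>) ` ({..m} \<times> words m n)"
    unfolding words_def by (auto simp: length_Suc_conv image_iff)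
  moreover have "inj_on (\<lambda>(c, \<tau>). c # \<tau>) ({..m} \<times> words m n)"
    by (auto simp: inj_on_def)
  ultimately show ?thesis
    by (simp add: sum.reindex sum.cartesian_product finite_words prod.case_distrib)
qed

lemma wprob_Cons: "wprob p (c # \<tau>) = p c * wprob p \<tau>"
  unfolding wprob_def by (simp only: length_Cons prod.lessThan_Suc_shift) simp

lemma digit_mass_eq_sum_words:
  "digit_mass d m p n X = (\<Sum>\<tau>\<in>words m n. if digit_val d \<tau> = X then wprob p \<tau> else 0)"
proof (induction n arbitrary: X)
  case 0
  have "words m 0 = {[]}"
    unfolding words_def by auto
  then show ?case
    by (simp add: wprob_def)
next
  case (Suc n)
  have "length \<tau> = n" if "\<tau> \<in> words m n" for \<tau>
    using that by (simp add: words_def)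
  then have "(\<Sum>\<tau>\<in>words m n. if digit_val d (c # \<tau>) = X then wprob p (c # \<tau>) else 0)
      = p c * digit_mass d m p n (X - int c * int d ^ n)" for c
    by (auto simp: Suc wprob_Cons sum_distrib_left intro!: sum.cong)
  then show ?case
    by (simp add: sum_words_Suc)
qed

lemma eta_eq_digit_mass:
  assumes "0 < d"
  shows "eta d m p \<sigma> = digit_mass d m p (length \<sigma>) (digit_val d \<sigma>)"
proof -
  have proj_eq: "proj d \<tau> = digit_val d \<tau> / real d ^ length \<tau>" for \<tau>
    using proj_mult_power_eq_digit_val[OF assms, of \<tau>] assms by (simp add: field_simps)
  have "{\<tau> \<in> words m (length \<sigma>). proj d \<tau> = proj d \<sigma>}
      = {\<tau> \<in> words m (length \<sigma>). digit_val d \<tau> = digit_val d \<sigma>}"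
    using assms by (auto simp: words_def proj_eq)
  then show ?thesis
    by (simp add: eta_def digit_mass_eq_sum_words sum.inter_filter finite_words)
qed

lemma wprob_ge_power:
  assumes "set \<tau> \<subseteq> {0..m}" "\<And>i. i \<le> m \<Longrightarrow> q \<le> p i" "0 \<le> q"
  shows "q ^ length \<tau> \<le> wprob p \<tau>"
proof -
  have "(\<Prod>j<length \<tau>. q) \<le> (\<Prod>j<length \<tau>. p (\<tau> ! j))"
    using assms nth_mem[of _ \<tau>] by (intro prod_mono) fastforce
  then show ?thesis
    unfolding wprob_def by simp
qed

lemma wprob_nonneg: "set \<tau> \<subseteq> {0..m} \<Longrightarrow> (\<And>i. i \<le> m \<Longrightarrow> 0 \<le> p i) \<Longrightarrow> 0 \<le> wprob p \<tau>"
  unfolding wprob_def by (intro prod_nonneg) (auto dest!: nth_mem)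

lemma wprob_le_eta:
  assumes "set \<sigma> \<subseteq> {0..m}" "\<And>i. i \<le> m \<Longrightarrow> 0 \<le> p i"
  shows "wprob p \<sigma> \<le> eta d m p \<sigma>"
  unfolding eta_def
proof (rule member_le_sum)
  show "\<sigma> \<in> {\<sigma>' \<in> words m (length \<sigma>). proj d \<sigma>' = proj d \<sigma>}"
    using assms(1) by (simp add: words_def)
  show "finite {\<sigma>' \<in> words m (length \<sigma>). proj d \<sigma>' = proj d \<sigma>}"
    by (simp add: finite_words)
qed (use assms(2) in \<open>auto simp: words_def intro: wprob_nonneg\<close>)

lemma eta_nonneg: "(\<And>i. i \<le> m \<Longrightarrow> 0 \<le> p i) \<Longrightarrow> 0 \<le> eta d m p \<sigma>"
  unfolding eta_def by (intro sum_nonneg wprob_nonneg) (auto simp: words_def)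

definition digit_mass_quot :: "nat \<Rightarrow> nat \<Rightarrow> (nat \<Rightarrow> real) \<Rightarrow> nat \<Rightarrow> int \<Rightarrow> real" where
  "digit_mass_quot d m p n X = (if int d dvd X then digit_mass d m p n (X div int d) else 0)"

lemma digit_mass_quot_nonneg: "(\<And>i. i \<le> m \<Longrightarrow> 0 \<le> p i) \<Longrightarrow> 0 \<le> digit_mass_quot d m p n X"
  by (simp add: digit_mass_quot_def digit_mass_nonneg)

lemma digit_mass_quot_add_mult:
  assumes "0 < d"
  shows "digit_mass_quot d m p n (X + int d * Y)
    = (if int d dvd X then digit_mass d m p n (X div int d + Y) else 0)"
  using assms by (simp add: digit_mass_quot_def dvd_add_left_iff add.commute[of Y])

lemma digit_mass_quot_carry_le:
  assumes "0 < d" "0 \<le> N" "0 \<le> C" and nonneg: "\<And>i. i \<le> m \<Longrightarrow> 0 \<le> p i"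
    and succ: "\<And>X. 0 \<le> X \<Longrightarrow> digit_mass d m p n (X + 1) \<le> C * digit_mass d m p n X"
  shows "digit_mass_quot d m p n (N + 1) \<le> C * digit_mass_quot d m p n (N + 1 - int d)"
proof (cases "int d dvd N + 1")
  case True
  then obtain q where q: "N + 1 = int d * q" ..
  with assms(2) have "0 < int d * q"
    by linarith
  with assms(1) have "0 < q"
    by (simp add: zero_less_mult_iff)
  with q assms(1) show ?thesis
    using succ[of "q - 1"] by (simp add: digit_mass_quot_def right_diff_distrib)
next
  case False
  then show ?thesis
    using assms(3) digit_mass_quot_nonneg[OF nonneg] by (simp add: digit_mass_quot_def)
qed

lemma digit_mass_Suc_last:
  assumes "0 < d"
  shows "digit_mass d m p (Suc n) X = (\<Sum>c\<le>m. p c * digit_mass_quot d m p n (X - int c))"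
proof (induction n arbitrary: X)
  case 0
  have dvd_div_0: "int d dvd Y \<and> Y div int d = 0 \<longleftrightarrow> Y = 0" for Y
    using assms by auto
  have "digit_mass_quot d m p 0 (X - int c) = (if X = int c then 1 else 0)" for c
    using dvd_div_0[of "X - int c"] by (auto simp: digit_mass_quot_def)
  then show ?case
    by simp
next
  case (Suc n)
  have quot: "digit_mass_quot d m p n (X - int c * int d ^ Suc n - int e)
      = (if int d dvd X - int e then digit_mass d m p n ((X - int e) div int d - int c * int d ^ n) else 0)"
    for c e
    using digit_mass_quot_add_mult[OF assms, of m p n "X - int e" "- int c * int d ^ n"]
    by (simp add: algebra_simps)
  have "digit_mass d m p (Suc (Suc n)) X = (\<Sum>c\<le>m. p c * digit_mass d m p (Suc n) (X - int c * int d ^ Suc n))"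
    by (rule digit_mass.simps(2))
  also have "\<dots> = (\<Sum>c\<le>m. \<Sum>e\<le>m. p e * (if int d dvd X - int e
      then p c * digit_mass d m p n ((X - int e) div int d - int c * int d ^ n) else 0))"
    unfolding Suc.IH quot sum_distrib_left by (intro sum.cong refl) (simp add: mult.left_commute)
  also have "\<dots> = (\<Sum>e\<le>m. \<Sum>c\<le>m. p e * (if int d dvd X - int e
      then p c * digit_mass d m p n ((X - int e) div int d - int c * int d ^ n) else 0))"
    by (rule sum.swap)
  also have "\<dots> = (\<Sum>e\<le>m. p e * digit_mass_quot d m p (Suc n) (X - int e))"
    unfolding digit_mass_quot_def digit_mass.simps by (intro sum.cong refl) (simp add: sum_distrib_left mult.left_commute)
  finally show ?case .
qed

lemma digit_mass_reflect:
  "digit_mass d m (\<lambda>c. p (m - c)) n (max_digit_val d m n - X) = digit_mass d m p n X"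
proof (induction n arbitrary: X)
  case 0
  then show ?case by auto
next
  case (Suc n)
  have shifted: "digit_mass d m (\<lambda>c. p (m - c)) n (max_digit_val d m (Suc n) - X - int c * int d ^ n)
      = digit_mass d m p n (X - int (m - c) * int d ^ n)" if "c \<le> m" for c
  proof -
    have "max_digit_val d m (Suc n) - X - int c * int d ^ n = max_digit_val d m n - (X - int (m - c) * int d ^ n)"
      using that by (simp add: of_nat_diff algebra_simps)
    then show ?thesis
      by (simp only: Suc.IH)
  qed
  have "digit_mass d m (\<lambda>c. p (m - c)) (Suc n) (max_digit_val d m (Suc n) - X)
      = (\<Sum>c\<le>m. p (m - c) * digit_mass d m p n (X - int (m - c) * int d ^ n))"
    unfolding digit_mass.simps(2) by (intro sum.cong refl) (simp only: atMost_iff shifted)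
  also have "\<dots> = (\<Sum>c\<le>m. p c * digit_mass d m p n (X - int c * int d ^ n))"
    using sum.atLeastAtMost_rev[of "\<lambda>c. p c * digit_mass d m p n (X - int c * int d ^ n)" 0 m]
    by (simp add: atLeast0AtMost)
  finally show ?case
    by simp
qed

lemma Mw_nonneg: "(\<And>i. i \<le> m \<Longrightarrow> 0 \<le> p i) \<Longrightarrow> 0 \<le> Mw d m p \<sigma> k l"
  by (induction \<sigma> arbitrary: k l)
    (auto simp: mat_id_def mat_mult_def Mi_def pext_def intro!: sum_nonneg mult_nonneg_nonneg)

lemma Mw_le_digit_mass:
  assumes nonneg: "\<And>i. i \<le> m \<Longrightarrow> 0 \<le> p i"
  shows "Mw d m p \<sigma> k l \<le> digit_mass d m p (length \<sigma>) (digit_val d \<sigma> + k - l * int d ^ length \<sigma>)"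
proof (induction \<sigma> arbitrary: k l)
  case Nil
  then show ?case by (simp add: mat_id_def)
next
  case (Cons i \<sigma>)
  let ?n = "length \<sigma>"
  let ?F = "\<lambda>j. digit_mass d m p ?n (digit_val d \<sigma> + k - j * int d ^ ?n)"
  define e where "e = int i - l * int d"
  \<comment> \<open>only the columns j = c - e with c \<le> m contribute, c being the leading digit\<close>
  have pext_nonneg: "0 \<le> pext m p j" for j
    using nonneg by (simp add: pext_def nat_le_iff)
  have "Mw d m p (i # \<sigma>) k l = (\<Sum>j\<in>idx d m. Mw d m p \<sigma> k j * pext m p (j + e))"
    by (simp add: mat_mult_def Mi_def e_def algebra_simps)
  also have "\<dots> \<le> (\<Sum>j\<in>idx d m. pext m p (j + e) * ?F j)"
    using Cons.IH pext_nonneg by (intro sum_mono) (simp add: mult.commute mult_left_mono)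
  also have "\<dots> \<le> (\<Sum>j\<in>(\<lambda>c. int c - e) ` {..m}. pext m p (j + e) * ?F j)"
  proof (rule sum_le_sum_vanishing_outside)
    show "pext m p (j + e) * ?F j = 0" if "j \<in> idx d m - (\<lambda>c. int c - e) ` {..m}" for j
    proof -
      have "\<not> (0 \<le> j + e \<and> j + e \<le> int m)"
      proof
        assume "0 \<le> j + e \<and> j + e \<le> int m"
        then have "nat (j + e) \<in> {..m}" "j = int (nat (j + e)) - e"
          by auto
        with that show False
          by blast
      qed
      then show ?thesis
        unfolding pext_def by auto
    qed
  qed (use pext_nonneg digit_mass_nonneg[OF nonneg] in \<open>auto simp: idx_def\<close>)
  also have "\<dots> = (\<Sum>c\<le>m. p c * ?F (int c - e))"
    by (subst sum.reindex) (auto simp: inj_on_def pext_def)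
  also have "\<dots> = digit_mass d m p (length (i # \<sigma>)) (digit_val d (i # \<sigma>) + k - l * int d ^ length (i # \<sigma>))"
    by (simp add: e_def algebra_simps)
  finally show ?case .
qed

lemma Mw_le_eta_div_power:
  assumes \<sigma>: "set \<sigma> \<subseteq> {0..m}" and nonneg: "\<And>i. i \<le> m \<Longrightarrow> 0 \<le> p i" and "(\<Sum>i\<le>m. p i) = 1"
    and q: "0 < q" "\<And>i. i \<le> m \<Longrightarrow> q \<le> p i"
  shows "Mw d m p \<sigma> k l \<le> eta d m p \<sigma> / q ^ length \<sigma>"
proof -
  have "Mw d m p \<sigma> k l \<le> digit_mass d m p (length \<sigma>) (digit_val d \<sigma> + k - l * int d ^ length \<sigma>)"
    by (rule Mw_le_digit_mass[OF nonneg])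
  also have "\<dots> \<le> 1"
    using nonneg assms(3) by (rule digit_mass_le_1)
  also have "1 \<le> eta d m p \<sigma> / q ^ length \<sigma>"
  proof -
    have "q ^ length \<sigma> \<le> wprob p \<sigma>"
      using \<sigma> q by (intro wprob_ge_power) auto
    also have "\<dots> \<le> eta d m p \<sigma>"
      using \<sigma> nonneg by (rule wprob_le_eta)
    finally show ?thesis
      using q by (simp add: le_divide_eq_1_pos)
  qed
  finally show ?thesis .
qed

lemma ex_ratio_bound:
  fixes p :: "nat \<Rightarrow> real"
  assumes "\<And>i. i \<le> m \<Longrightarrow> 0 < p i"
  shows "\<exists>K\<ge>1. \<forall>c<m. p (Suc c) \<le> K * p c \<and> p c \<le> K * p (Suc c)"
  using assms
proof (induction m)
  case 0
  show ?case by auto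
next
  case (Suc m)
  have pos: "0 < p c" if "c \<le> Suc m" for c
    using Suc.prems that by simp
  then obtain K where K: "1 \<le> K" "\<forall>c<m. p (Suc c) \<le> K * p c \<and> p c \<le> K * p (Suc c)"
    using Suc.IH by auto
  define K' where "K' = max K (max (p (Suc m) / p m) (p m / p (Suc m)))"
  have "p (Suc c) \<le> K' * p c \<and> p c \<le> K' * p (Suc c)" if "c < Suc m" for c
  proof (cases "c < m")
    case True
    have "K * p c \<le> K' * p c" "K * p (Suc c) \<le> K' * p (Suc c)"
      using pos[of c] pos[of "Suc c"] that by (auto simp: K'_def intro!: mult_right_mono)
    moreover have "p (Suc c) \<le> K * p c" "p c \<le> K * p (Suc c)"
      using K(2) True by auto
    ultimately show ?thesis
      by linarith
  next
    case False
    then have "c = m"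
      using that by simp
    moreover have "p (Suc m) / p m \<le> K'" "p m / p (Suc m) \<le> K'"
      by (simp_all add: K'_def)
    ultimately show ?thesis
      using pos[of m] pos[of "Suc m"] by (simp add: pos_divide_le_eq)
  qed
  moreover have "1 \<le> K'"
    using K by (simp add: K'_def)
  ultimately show ?case
    by blast
qed

lemma digit_quotient_in_cone:
  fixes Z Z' :: int
  assumes xi: "real m \<le> (real d - 1) * xi" and "0 < d" "c \<le> m" and Z': "Z - int c = int d * Z'"
    and "\<alpha> * real d ^ Suc n - xi \<le> Z" "Z \<le> \<beta> * real d ^ Suc n"
  shows "\<alpha> * real d ^ n - xi \<le> Z'" "Z' \<le> \<beta> * real d ^ n"
proof -
  have Z'_real: "real_of_int Z - real c = real d * Z'"
    using arg_cong[OF Z', of real_of_int] by simp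
  have "real d * (\<alpha> * real d ^ n - xi) = \<alpha> * real d ^ Suc n - xi - (real d - 1) * xi"
    by (simp add: algebra_simps)
  also have "\<dots> \<le> real d * Z'"
    using assms(3,5) xi Z'_real by simp
  finally show "\<alpha> * real d ^ n - xi \<le> Z'"
    using \<open>0 < d\<close> by simp
  have "real d * Z' \<le> real d * (\<beta> * real d ^ n)"
    using assms(6) Z'_real by (simp add: algebra_simps)
  then show "Z' \<le> \<beta> * real d ^ n"
    using \<open>0 < d\<close> by simp
qed

locale bounded_ratio_weights =
  fixes d m :: nat and p :: "nat \<Rightarrow> real" and K :: real
  assumes base_ge_2: "2 \<le> d" and base_le: "d \<le> m + 1"
    and nonneg: "\<And>i. i \<le> m \<Longrightarrow> 0 \<le> p i"
    and ratio_up: "\<And>c. c < m \<Longrightarrow> p (Suc c) \<le> K * p c"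
    and ratio_down: "\<And>c. c < m \<Longrightarrow> p c \<le> K * p (Suc c)"
    and K_ge_1: "1 \<le> K"
    and first_le: "p 0 \<le> p (d - 1)"
    and last_le: "p m \<le> p (m + 1 - d)"
begin

lemma reflect: "bounded_ratio_weights d m (\<lambda>c. p (m - c)) K"
proof
  show "p (m - Suc c) \<le> K * p (m - c)" if "c < m" for c
    using ratio_down[of "m - Suc c"] that by (simp add: Suc_diff_Suc)
  show "p (m - c) \<le> K * p (m - Suc c)" if "c < m" for c
    using ratio_up[of "m - Suc c"] that by (simp add: Suc_diff_Suc)
  show "p (m - 0) \<le> p (m - (d - 1))"
    using last_le base_ge_2 by (simp add: Suc_diff_le)
  show "p (m - m) \<le> p (m - (m + 1 - d))"
    using first_le base_ge_2 base_le by simp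
qed (use base_ge_2 base_le nonneg K_ge_1 in auto)

(* Last digit c + 1 of N + 1 is traded for last digit c of N at cost K; last digit 0 is a carry,
   traded for last digit d - 1 of N at the cost of the induction hypothesis. *)
lemma digit_mass_succ_le:
  assumes "0 \<le> N"
  shows "digit_mass d m p n (N + 1) \<le> K * (real n + 1) * digit_mass d m p n N"
  using assms
proof (induction n arbitrary: N)
  case 0
  then show ?case using K_ge_1 by simp
next
  case (Suc n)
  let ?Q = "digit_mass_quot d m p n"
  let ?S = "\<Sum>c\<le>m. p c * ?Q (N - int c)"
  have d0: "0 < d"
    using base_ge_2 by simp
  obtain m' where m': "m = Suc m'"
    using base_ge_2 base_le by (cases m) auto
  have Q_nonneg: "0 \<le> ?Q X" for X
    by (rule digit_mass_quot_nonneg[OF nonneg])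
  have lead: "?Q (N + 1) \<le> K * (real n + 1) * ?Q (N + 1 - int d)"
    using d0 Suc nonneg K_ge_1 by (intro digit_mass_quot_carry_le) auto
  have "digit_mass d m p (Suc n) (N + 1) = p 0 * ?Q (N + 1) + (\<Sum>c\<le>m'. p (Suc c) * ?Q (N - int c))"
    unfolding digit_mass_Suc_last[OF d0] m' sum.atMost_Suc_shift by simp
  also have "(\<Sum>c\<le>m'. p (Suc c) * ?Q (N - int c)) \<le> (\<Sum>c\<le>m'. K * (p c * ?Q (N - int c)))"
    using ratio_up m' Q_nonneg by (intro sum_mono) (simp add: mult_right_mono mult.assoc[symmetric])
  also have "\<dots> \<le> K * ?S"
    unfolding sum_distrib_left[symmetric] using K_ge_1 m' nonneg Q_nonneg
    by (intro mult_left_mono sum_mono2) auto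
  also have "p 0 * ?Q (N + 1) \<le> p (d - 1) * (K * (real n + 1) * ?Q (N - int (d - 1)))"
    using lead first_le d0 Q_nonneg nonneg[of "d - 1"] base_le
    by (intro mult_mono) (simp_all add: of_nat_diff algebra_simps)
  also have "\<dots> = K * (real n + 1) * (p (d - 1) * ?Q (N - int (d - 1)))"
    by (simp add: algebra_simps)
  also have "\<dots> \<le> K * (real n + 1) * ?S"
    using K_ge_1 base_le nonneg Q_nonneg
    by (intro mult_left_mono member_le_sum[where f="\<lambda>c. p c * ?Q (N - int c)"]) auto
  finally show ?case
    unfolding digit_mass_Suc_last[OF d0] by (simp add: algebra_simps)
qed

lemma one_le_growth: "1 \<le> K * (real n + 1)"
  using K_ge_1 mult_mono[of 1 K 1 "real n + 1"] by simp

lemma digit_mass_add_le: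
  assumes "0 \<le> N"
  shows "digit_mass d m p n (N + int j) \<le> (K * (real n + 1)) ^ j * digit_mass d m p n N"
proof (induction j)
  case 0
  then show ?case by simp
next
  case (Suc j)
  have "digit_mass d m p n (N + int (Suc j)) \<le> K * (real n + 1) * digit_mass d m p n (N + int j)"
    using digit_mass_succ_le[of "N + int j" n] assms by (simp add: add_ac)
  also have "\<dots> \<le> K * (real n + 1) * ((K * (real n + 1)) ^ j * digit_mass d m p n N)"
    using Suc K_ge_1 by (intro mult_left_mono) auto
  finally show ?case
    by (simp add: algebra_simps)
qed

lemma digit_mass_diff_le:
  assumes "N \<le> max_digit_val d m n"
  shows "digit_mass d m p n (N - int j) \<le> (K * (real n + 1)) ^ j * digit_mass d m p n N"
proof -
  interpret reflected: bounded_ratio_weights d m "\<lambda>c. p (m - c)" K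
    by (rule reflect)
  have "digit_mass d m p n (N - int j)
      = digit_mass d m (\<lambda>c. p (m - c)) n ((max_digit_val d m n - N) + int j)"
    using digit_mass_reflect[of d m p n "N - int j"] by (simp add: algebra_simps)
  also have "\<dots> \<le> (K * (real n + 1)) ^ j * digit_mass d m (\<lambda>c. p (m - c)) n (max_digit_val d m n - N)"
    using assms by (intro reflected.digit_mass_add_le) simp
  also have "\<dots> = (K * (real n + 1)) ^ j * digit_mass d m p n N"
    by (simp add: digit_mass_reflect)
  finally show ?thesis .
qed

lemma digit_mass_shift_le:
  assumes "0 \<le> N" "N \<le> max_digit_val d m n" "\<bar>j\<bar> \<le> int J"
  shows "digit_mass d m p n (N + j) \<le> (K * (real n + 1)) ^ J * digit_mass d m p n N"
proof -
  have "digit_mass d m p n (N + j) \<le> (K * (real n + 1)) ^ nat \<bar>j\<bar> * digit_mass d m p n N"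
  proof (cases "0 \<le> j")
    case True
    then show ?thesis
      using digit_mass_add_le[OF assms(1), of n "nat j"] by simp
  next
    case False
    then show ?thesis
      using digit_mass_diff_le[OF assms(2), of "nat (- j)"] by simp
  qed
  also have "\<dots> \<le> (K * (real n + 1)) ^ J * digit_mass d m p n N"
    using assms(3) one_le_growth digit_mass_nonneg[OF nonneg]
    by (intro mult_right_mono power_increasing) auto
  finally show ?thesis .
qed

(* Removing the last digit keeps the value in the cone and turns the shift by l d^(n+1) into the
   shift by l d^n, so the cost is that of the shift at level R. *)
lemma digit_mass_far_shift_le:
  assumes xi: "real m \<le> (real d - 1) * xi"
    and lower: "xi \<le> \<alpha> * real d ^ R" and upper: "\<beta> * real d ^ R \<le> max_digit_val d m R"
    and l: "\<bar>l\<bar> \<le> int L" and "R \<le> n"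
    and "\<alpha> * real d ^ n - xi \<le> Z" "Z \<le> \<beta> * real d ^ n"
  shows "digit_mass d m p n (Z - l * int d ^ n)
    \<le> (K * (real R + 1)) ^ (L * d ^ R) * digit_mass d m p n Z"
  using \<open>R \<le> n\<close> assms(6,7)
proof (induction n arbitrary: Z rule: dec_induct)
  case base
  have "0 \<le> Z" "Z \<le> max_digit_val d m R"
    using base lower upper by linarith+
  moreover have "\<bar>- l * int d ^ R\<bar> \<le> int (L * d ^ R)"
    using l by (simp add: abs_mult mult_right_mono)
  ultimately show ?case
    using digit_mass_shift_le[of Z R "- l * int d ^ R" "L * d ^ R"] by simp
next
  case (step n)
  let ?C = "(K * (real R + 1)) ^ (L * d ^ R)"
  let ?Q = "digit_mass_quot d m p n"
  have d0: "0 < d"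
    using base_ge_2 by simp
  have "?Q (Z - l * int d ^ Suc n - int c) \<le> ?C * ?Q (Z - int c)" if "c \<le> m" for c
  proof -
    have quot_shift: "?Q (Z - l * int d ^ Suc n - int c)
        = (if int d dvd Z - int c then digit_mass d m p n ((Z - int c) div int d - l * int d ^ n) else 0)"
      using digit_mass_quot_add_mult[OF d0, of m p n "Z - int c" "- l * int d ^ n"]
      by (simp add: algebra_simps)
    show ?thesis
    proof (cases "int d dvd Z - int c")
      case True
      then obtain Z' where Z': "Z - int c = int d * Z'" ..
      with xi d0 that step.prems have "\<alpha> * real d ^ n - xi \<le> Z'" "Z' \<le> \<beta> * real d ^ n"
        by (auto intro: digit_quotient_in_cone)
      then have "digit_mass d m p n (Z' - l * int d ^ n) \<le> ?C * digit_mass d m p n Z'"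
        by (rule step.IH)
      then show ?thesis
        using quot_shift Z' d0 by (simp add: digit_mass_quot_def)
    next
      case False
      then show ?thesis
        using quot_shift by (simp add: digit_mass_quot_def)
    qed
  qed
  then have "(\<Sum>c\<le>m. p c * ?Q (Z - l * int d ^ Suc n - int c)) \<le> (\<Sum>c\<le>m. ?C * (p c * ?Q (Z - int c)))"
    using nonneg by (intro sum_mono) (simp add: mult.left_commute mult_left_mono)
  then show ?case
    unfolding digit_mass_Suc_last[OF d0] sum_distrib_left[symmetric] .
qed

lemma Mw_le_interior:
  assumes xi: "real m \<le> (real d - 1) * xi"
    and lower: "xi \<le> \<alpha> * real d ^ R" and upper: "\<beta> * real d ^ R \<le> max_digit_val d m R"
    and \<sigma>: "set \<sigma> \<subseteq> {0..m}" "R \<le> length \<sigma>"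
    and k: "\<bar>k\<bar> \<le> int L" and l: "\<bar>l\<bar> \<le> int L"
    and "\<alpha> * real d ^ length \<sigma> - xi \<le> digit_val d \<sigma> + k" "digit_val d \<sigma> + k \<le> \<beta> * real d ^ length \<sigma>"
  shows "Mw d m p \<sigma> k l
    \<le> (K * (real R + 1)) ^ (L * d ^ R) * ((K * (real (length \<sigma>) + 1)) ^ L * eta d m p \<sigma>)"
proof -
  let ?n = "length \<sigma>" and ?N = "digit_val d \<sigma>"
  have "Mw d m p \<sigma> k l \<le> digit_mass d m p ?n (?N + k - l * int d ^ ?n)"
    by (rule Mw_le_digit_mass[OF nonneg])
  also have "\<dots> \<le> (K * (real R + 1)) ^ (L * d ^ R) * digit_mass d m p ?n (?N + k)"
    using digit_mass_far_shift_le[OF xi lower upper l \<sigma>(2)] assms(8,9) by simp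
  also have "digit_mass d m p ?n (?N + k) \<le> (K * (real ?n + 1)) ^ L * digit_mass d m p ?n ?N"
    using digit_val_nonneg digit_val_le_max[OF \<sigma>(1)] k by (rule digit_mass_shift_le)
  also have "digit_mass d m p ?n ?N = eta d m p \<sigma>"
    using base_ge_2 by (simp add: eta_eq_digit_mass)
  finally show ?thesis
    using K_ge_1 by (simp add: mult_left_mono)
qed

(* The cone of digit_mass_far_shift_le is taken between s/2 and (t + xi)/2: at level R it lies
   in [0, max_digit_val], and it contains N + k for every word of length at least R. *)
lemma Mw_le_power_eta_long:
  assumes xi: "xi = real m / (real d - 1)" and st: "0 < s" "t < xi"
    and R: "xi + L \<le> s / 2 * real d ^ R" "xi + L \<le> (xi - t) / 2 * real d ^ R"
    and \<sigma>: "set \<sigma> \<subseteq> {0..m}" "R \<le> length \<sigma>" "s \<le> proj d \<sigma>" "proj d \<sigma> \<le> t"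
    and kl: "\<bar>k\<bar> \<le> int L" "\<bar>l\<bar> \<le> int L"
  shows "Mw d m p \<sigma> k l
    \<le> (K * (real R + 1)) ^ (L * d ^ R) * (2 * K) ^ L * real (length \<sigma>) ^ L * eta d m p \<sigma>"
proof -
  let ?n = "length \<sigma>" and ?N = "digit_val d \<sigma>"
  let ?D = "real d ^ ?n" and ?DR = "real d ^ R"
  have d1: "1 < real d"
    using base_ge_2 by simp
  have xi_eq: "real m = (real d - 1) * xi" and "0 \<le> xi"
    using d1 by (simp_all add: xi)
  have "\<sigma> \<noteq> []"
    using \<sigma>(3) st(1) by (auto simp: proj_def)
  then have n1: "1 \<le> ?n"
    by (simp add: Suc_le_eq)
  have N: "s * ?D \<le> ?N" "?N \<le> t * ?D"
    using mult_right_mono[OF \<sigma>(3), of ?D] mult_right_mono[OF \<sigma>(4), of ?D]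
      proj_mult_power_eq_digit_val[of d \<sigma>] base_ge_2 by simp_all
  have k: "- real L \<le> real_of_int k" "real_of_int k \<le> real L"
    using kl(1) by linarith+
  have "?DR \<le> ?D"
    using d1 \<sigma>(2) by (simp add: power_increasing)
  then have big: "xi + L \<le> s / 2 * ?D" "xi + L \<le> (xi - t) / 2 * ?D"
    using R st by (smt (verit) mult_left_mono divide_nonneg_pos)+
  have lower: "xi \<le> s / 2 * ?DR"
    using R(1) by simp
  have "real_of_int (max_digit_val d m R) = xi * ?DR - xi"
    using max_digit_val_eq[of d m R] base_ge_2 unfolding xi[symmetric] by (simp add: right_diff_distrib)
  moreover have "(t + xi) / 2 * ?DR = xi * ?DR - (xi - t) / 2 * ?DR"
    by (simp add: field_simps)
  ultimately have upper: "(t + xi) / 2 * ?DR \<le> max_digit_val d m R"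
    using R(2) by simp
  have "s / 2 * ?D = s * ?D / 2" "(xi - t) / 2 * ?D = (t + xi) / 2 * ?D - t * ?D"
    by (simp_all add: field_simps)
  then have region: "s / 2 * ?D - xi \<le> ?N + k" "?N + k \<le> (t + xi) / 2 * ?D"
    using N k big \<open>0 \<le> xi\<close> by linarith+
  have "Mw d m p \<sigma> k l \<le> (K * (real R + 1)) ^ (L * d ^ R) * ((K * (real ?n + 1)) ^ L * eta d m p \<sigma>)"
    using xi_eq by (intro Mw_le_interior[OF _ lower upper \<sigma>(1,2) kl region]) simp
  also have "\<dots> \<le> (K * (real R + 1)) ^ (L * d ^ R) * ((2 * K * real ?n) ^ L * eta d m p \<sigma>)"
    using K_ge_1 n1 eta_nonneg[OF nonneg] by (intro mult_left_mono mult_right_mono power_mono) (simp_all add: algebra_simps)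
  finally show ?thesis
    by (simp add: power_mult_distrib mult_ac)
qed

lemma Mw_le_const_mult_power_eta:
  assumes xi: "xi = real m / (real d - 1)" and st: "0 < s" "t < xi"
    and R: "xi + L \<le> s / 2 * real d ^ R" "xi + L \<le> (xi - t) / 2 * real d ^ R"
    and q: "0 < q" "q \<le> 1" "\<And>i. i \<le> m \<Longrightarrow> q \<le> p i" and sum_1: "(\<Sum>i\<le>m. p i) = 1"
    and \<sigma>: "set \<sigma> \<subseteq> {0..m}" "s \<le> proj d \<sigma>" "proj d \<sigma> \<le> t"
    and kl: "\<bar>k\<bar> \<le> int L" "\<bar>l\<bar> \<le> int L"
  shows "Mw d m p \<sigma> k l \<le> ((K * (real R + 1)) ^ (L * d ^ R) * (2 * K) ^ L + 1 / q ^ R)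
    * real (length \<sigma>) ^ L * eta d m p \<sigma>"
proof -
  let ?n = "length \<sigma>"
  have eta: "0 \<le> eta d m p \<sigma>"
    by (rule eta_nonneg[OF nonneg])
  have "\<sigma> \<noteq> []"
    using \<sigma>(2) st(1) by (auto simp: proj_def)
  then have "1 \<le> real ?n ^ L"
    by (simp add: Suc_le_eq)
  show ?thesis
  proof (cases "R \<le> ?n")
    case True
    then have "Mw d m p \<sigma> k l \<le> (K * (real R + 1)) ^ (L * d ^ R) * (2 * K) ^ L * real ?n ^ L * eta d m p \<sigma>"
      using \<sigma> kl by (intro Mw_le_power_eta_long[OF xi st R]) auto
    moreover have "0 \<le> 1 / q ^ R * real ?n ^ L * eta d m p \<sigma>"
      using eta q(1) by simp
    ultimately show ?thesis
      unfolding distrib_right by linarith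
  next
    case False
    have "Mw d m p \<sigma> k l \<le> eta d m p \<sigma> / q ^ ?n"
      using \<sigma>(1) nonneg sum_1 q(1,3) by (rule Mw_le_eta_div_power)
    also have "\<dots> \<le> eta d m p \<sigma> / q ^ R"
      using False q(1,2) eta by (intro divide_left_mono power_decreasing) auto
    also have "\<dots> \<le> 1 / q ^ R * real ?n ^ L * eta d m p \<sigma>"
      using \<open>1 \<le> real ?n ^ L\<close> eta q(1) by (simp add: divide_right_mono mult_le_cancel_right1)
    also have "\<dots> \<le> ((K * (real R + 1)) ^ (L * d ^ R) * (2 * K) ^ L + 1 / q ^ R) * real ?n ^ L * eta d m p \<sigma>"
      using eta K_ge_1 by (intro mult_right_mono) auto
    finally show ?thesis .
  qed
qed

end

lemma ex_bounded_ratio_weights: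
  assumes d: "2 \<le> d" "d \<le> m" and pos: "\<And>i. i \<le> m \<Longrightarrow> 0 < p i"
    and p0m: "p 0 \<le> p m" and pmi: "\<And>i. 1 \<le> i \<Longrightarrow> i \<le> m - 1 \<Longrightarrow> p m \<le> p i"
  shows "\<exists>K. bounded_ratio_weights d m p K"
proof -
  obtain K where K: "1 \<le> K" "\<forall>c<m. p (Suc c) \<le> K * p c \<and> p c \<le> K * p (Suc c)"
    using ex_ratio_bound[of m p] pos by blast
  have "p m \<le> p (d - 1)" "p m \<le> p (m + 1 - d)"
    using d by (intro pmi; auto)+
  with d pos K p0m have "bounded_ratio_weights d m p K"
    by unfold_locales (auto simp: less_imp_le)
  then show ?thesis ..
qed

lemma Mw_entry_bound:
  fixes d m :: nat and p :: "nat \<Rightarrow> real" and s t :: real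
  assumes d: "2 \<le> d" "d \<le> m" and pos: "\<And>i. i \<le> m \<Longrightarrow> 0 < p i" and sum_1: "(\<Sum>i\<le>m. p i) = 1"
    and p0m: "p 0 \<le> p m" and pmi: "\<And>i. 1 \<le> i \<Longrightarrow> i \<le> m - 1 \<Longrightarrow> p m \<le> p i"
    and st: "0 < s" "t < real m / (real d - 1)"
  shows "\<exists>C>0. \<forall>\<sigma> k l. set \<sigma> \<subseteq> {0..m} \<and> proj d \<sigma> \<in> {s..t} \<and> k \<in> idx d m \<and> l \<in> idx d m \<longrightarrow>
    Mw d m p \<sigma> k l \<le> C * real (length \<sigma>) ^ nat (apar d m) * eta d m p \<sigma>"
proof -
  obtain K where "bounded_ratio_weights d m p K"
    using ex_bounded_ratio_weights[OF d pos p0m pmi] by blast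
  then interpret bounded_ratio_weights d m p K .
  define xi where "xi = real m / (real d - 1)"
  define L where "L = nat (apar d m)"
  define \<epsilon> where "\<epsilon> = min (s / 2) ((xi - t) / 2)"
  have "0 < \<epsilon>"
    using st by (simp add: \<epsilon>_def xi_def)
  obtain R where "(xi + L) / \<epsilon> < real d ^ R"
    using real_arch_pow[of "real d"] d by auto
  then have "xi + L \<le> \<epsilon> * real d ^ R"
    using \<open>0 < \<epsilon>\<close> by (simp add: pos_divide_less_eq mult.commute)
  then have R: "xi + L \<le> s / 2 * real d ^ R" "xi + L \<le> (xi - t) / 2 * real d ^ R"
    by (smt (verit) \<epsilon>_def mult_right_mono zero_le_power of_nat_0_le_iff)+
  define q where "q = Min (p ` {..m})"
  have q: "0 < q" "\<And>i. i \<le> m \<Longrightarrow> q \<le> p i"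
    using pos by (auto simp: q_def)
  moreover have "q \<le> 1"
    using q(2)[of 0] member_le_sum[of 0 "{..m}" p] nonneg sum_1 by simp
  ultimately show ?thesis
    using Mw_le_const_mult_power_eta[OF xi_def st(1) _ R q(1) \<open>q \<le> 1\<close> q(2) sum_1] st(2) K_ge_1
    by (intro exI[of _ "(K * (real R + 1)) ^ (L * d ^ R) * (2 * K) ^ L + 1 / q ^ R"] conjI)
      (auto simp: xi_def L_def idx_def add_nonneg_pos)
qed

theorem corollary11:
  fixes d m :: nat and p :: "nat \<Rightarrow> real" and s t :: real
  assumes "d \<ge> 3" and "m \<ge> d"
    and "\<And>i. i \<le> m \<Longrightarrow> p i > 0"
    and "(\<Sum>i\<le>m. p i) = 1"
    and "p 0 \<le> p m"
    and "\<And>i. 1 \<le> i \<Longrightarrow> i \<le> m - 1 \<Longrightarrow> p m \<le> p i"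
    and "0 < s" and "s < t" and "t < real m / (real d - 1)"
  shows "\<exists>C > 0. \<exists>D \<ge> 0. \<forall>\<sigma>. set \<sigma> \<subseteq> {0..m} \<and> proj d \<sigma> \<in> {s..t} \<longrightarrow>
           opnorm1 (idx d m) (Mw d m p \<sigma>) \<le> C * real (length \<sigma>) powr D * eta d m p \<sigma>"
proof -
  obtain C where "0 < C" and entry: "\<And>\<sigma> k l. set \<sigma> \<subseteq> {0..m} \<Longrightarrow> proj d \<sigma> \<in> {s..t} \<Longrightarrow>
      k \<in> idx d m \<Longrightarrow> l \<in> idx d m \<Longrightarrow> Mw d m p \<sigma> k l \<le> C * real (length \<sigma>) ^ nat (apar d m) * eta d m p \<sigma>"
    using Mw_entry_bound[of d m p s t] assms by auto
  have "0 \<le> (real m - real d) / (real d - 1)"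
    using assms(1,2) by simp
  then have "1 \<le> apar d m"
    by (simp add: apar_def)
  then have "0 < card (idx d m)"
    by (simp add: idx_def)
  have "opnorm1 (idx d m) (Mw d m p \<sigma>) \<le> real (card (idx d m)) * C * real (length \<sigma>) powr nat (apar d m) * eta d m p \<sigma>"
    if \<sigma>: "set \<sigma> \<subseteq> {0..m}" "proj d \<sigma> \<in> {s..t}" for \<sigma>
  proof -
    have "\<sigma> \<noteq> []"
      using \<sigma>(2) assms(7) by (auto simp: proj_def)
    have "opnorm1 (idx d m) (Mw d m p \<sigma>) \<le> real (card (idx d m)) * (C * real (length \<sigma>) ^ nat (apar d m) * eta d m p \<sigma>)"
      using entry[OF \<sigma>] Mw_nonneg[of m p] assms(3) by (intro opnorm1_le_card_mult) (auto simp: idx_def less_imp_le)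
    then show ?thesis
      using \<open>\<sigma> \<noteq> []\<close> by (simp add: powr_realpow mult.assoc)
  qed
  with \<open>0 < C\<close> \<open>0 < card (idx d m)\<close> show ?thesis
    by (intro exI[of _ "real (card (idx d m)) * C"] exI[of _ "real (nat (apar d m))"] conjI) auto
qed

end
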